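(* If a finite poset $P$ contains an articulation point, i.e., a point $x\in P$ comparable with every other point of $P$, then $P$ is an $\exists$-game.
   Context: A finite poset $P$ defines a poset game: two players alternate moves; a move consists of choosing a point $x$ of the current poset $Q$ and replacing $Q$ by $Q_x:=\{y\in Q: x\not\le y\}$ (i.e., removing $x$ and every point above it); the first player unable to move (because the poset is empty) loses. $P$ is an $\exists$-game if the player who moves first has a winning strategy, and a $\forall$-game otherwise. *)

theory Defs
  imports Main
begin

definition partial_order_rel :: "'a set \<Rightarrow> ('a \<Rightarrow> 'a \<Rightarrow> bool) \<Rightarrow> bool" where
  "partial_order_rel P le \<longleftrightarrow>
     (\<forall>x\<in>P. le x x) \<and>
     (\<forall>x\<in>P. \<forall>y\<in>P. le x y \<and> le y x \<longrightarrow> x = y) \<and>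
     (\<forall>x\<in>P. \<forall>y\<in>P. \<forall>z\<in>P. le x y \<and> le y z \<longrightarrow> le x z)"

definition poset_move :: "('a \<Rightarrow> 'a \<Rightarrow> bool) \<Rightarrow> 'a set \<Rightarrow> 'a \<Rightarrow> 'a set" where
  "poset_move le Q x = {y \<in> Q. \<not> le x y}"

text \<open>first_wins: the player to move has a winning strategy (exists-game);
first_loses: the player to move loses (forall-game).  For finite Q exactly one holds.\<close>
inductive first_wins and first_loses for le :: "'a \<Rightarrow> 'a \<Rightarrow> bool" where
  win: "x \<in> Q \<Longrightarrow> first_loses le (poset_move le Q x) \<Longrightarrow> first_wins le Q"
| lose: "(\<forall>x. x \<in> Q \<longrightarrow> first_wins le (poset_move le Q x)) \<Longrightarrow> first_loses le Q"

definition exists_game :: "'a set \<Rightarrow> ('a \<Rightarrow> 'a \<Rightarrow> bool) \<Rightarrow> bool" where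
  "exists_game P le \<longleftrightarrow> first_wins le P"

end

theory Submission
  imports Defs
begin

text \<open>Strategy stealing. Moving at the articulation point x leaves exactly the points strictly
below x. If that position is lost for the player to move, x is a winning first move. Otherwise
it has a winning move y < x; since everything above x is also above y, moving at y in x's
position leaves the same poset as moving at y in the whole of P, so y is a winning first move
in P as well.\<close>

lemma poset_move_subset: "poset_move le Q x \<subseteq> Q"
  by (auto simp: poset_move_def)

lemma card_poset_move_less:
  assumes "finite Q" "x \<in> Q" "le x x"
  shows "card (poset_move le Q x) < card Q"
proof -
  have "x \<notin> poset_move le Q x" using assms(3) by (simp add: poset_move_def)
  with assms(1,2) show ?thesis
    by (metis poset_move_subset psubsetI psubset_card_mono)
qed

lemma first_wins_iff:
  "first_wins le Q \<longleftrightarrow> (\<exists>x\<in>Q. first_loses le (poset_move le Q x))"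
  by (auto intro: first_wins_first_loses.win elim: first_wins.cases)

lemma first_wins_or_first_loses:
  assumes "finite Q" "\<forall>x\<in>Q. le x x"
  shows "first_wins le Q \<or> first_loses le Q"
  using assms
proof (induction "card Q" arbitrary: Q rule: less_induct)
  case less
  show ?case
  proof (cases "\<exists>x\<in>Q. first_loses le (poset_move le Q x)")
    case True
    then show ?thesis by (simp add: first_wins_iff)
  next
    case False
    have "first_wins le (poset_move le Q x)" if x: "x \<in> Q" for x
    proof -
      have "card (poset_move le Q x) < card Q"
        using less.prems x by (simp add: card_poset_move_less)
      moreover have "finite (poset_move le Q x)"
        using less.prems(1) poset_move_subset by (rule finite_subset[rotated])
      moreover have "\<forall>y\<in>poset_move le Q x. le y y"
        using less.prems(2) by (simp add: poset_move_def)
      ultimately have "first_wins le (poset_move le Q x) \<or> first_loses le (poset_move le Q x)"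
        by (rule less.hyps)
      with False x show ?thesis by blast
    qed
    then show ?thesis by (simp add: first_wins_first_loses.lose)
  qed
qed

lemma poset_move_poset_move_below:
  assumes "\<forall>a\<in>Q. \<forall>b\<in>Q. \<forall>c\<in>Q. le a b \<and> le b c \<longrightarrow> le a c"
    and "x \<in> Q" "y \<in> Q" "le y x"
  shows "poset_move le (poset_move le Q x) y = poset_move le Q y"
  using assms unfolding poset_move_def by blast

lemma first_wins_by_strategy_stealing:
  assumes "finite Q" "\<forall>z\<in>Q. le z z" "x \<in> Q"
    and absorb: "\<And>y. y \<in> poset_move le Q x \<Longrightarrow>
      poset_move le (poset_move le Q x) y = poset_move le Q y"
  shows "first_wins le Q"
proof (cases "first_loses le (poset_move le Q x)")
  case True
  with \<open>x \<in> Q\<close> show ?thesis by (auto simp: first_wins_iff)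
next
  case False
  moreover have "finite (poset_move le Q x)"
    using assms(1) poset_move_subset by (rule finite_subset[rotated])
  moreover have "\<forall>z\<in>poset_move le Q x. le z z"
    using assms(2) by (simp add: poset_move_def)
  ultimately have "first_wins le (poset_move le Q x)"
    using first_wins_or_first_loses by blast
  then obtain y where y: "y \<in> poset_move le Q x"
    and "first_loses le (poset_move le (poset_move le Q x) y)"
    by (auto simp: first_wins_iff)
  with absorb[OF y] have "first_loses le (poset_move le Q y)" by simp
  moreover have "y \<in> Q" using y by (simp add: poset_move_def)
  ultimately show ?thesis by (auto simp: first_wins_iff)
qed

theorem mainTheorem2:
  fixes P :: "'a set" and le :: "'a \<Rightarrow> 'a \<Rightarrow> bool" and x :: 'a
  assumes "finite P"
    and "partial_order_rel P le"
    and "x \<in> P"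
    and "\<forall>y\<in>P. y \<noteq> x \<longrightarrow> le x y \<or> le y x"
  shows "exists_game P le"
proof -
  have refl: "\<forall>y\<in>P. le y y"
    and trans: "\<forall>a\<in>P. \<forall>b\<in>P. \<forall>c\<in>P. le a b \<and> le b c \<longrightarrow> le a c"
    using assms(2) unfolding partial_order_rel_def by blast+
  have absorb: "poset_move le (poset_move le P x) y = poset_move le P y"
    if y: "y \<in> poset_move le P x" for y
  proof -
    have "y \<in> P" "\<not> le x y" using y by (auto simp: poset_move_def)
    moreover have "y \<noteq> x" using \<open>\<not> le x y\<close> refl assms(3) by blast
    ultimately have "le y x" using assms(4) by blast
    with \<open>y \<in> P\<close> show ?thesis
      by (rule poset_move_poset_move_below[OF trans assms(3)])
  qed
  have "first_wins le P"
    using assms(1) refl assms(3) absorb by (rule first_wins_by_strategy_stealing)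
  then show ?thesis by (simp add: exists_game_def)
qed

end
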